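(* If $G$ is a pseudo-cograph, then every connected induced subgraph $H$ of $G$ has diameter at most $4$. Consequently, a pseudo-cograph contains no induced path $P_n$ with $n\ge6$.
   Context: Graphs finite, simple, undirected; $G-v$ is $G$ with $v$ deleted; the join of vertex-disjoint graphs adds all edges between them to the disjoint union; a cograph is a graph without induced $P_4$; the diameter is the maximum distance between two vertices. $G$ is a pseudo-cograph if $|V(G)|\le2$ or there are induced subgraphs $G_1,G_2$ of $G$ and $v\in V(G)$ with (F1) $V(G)=V(G_1)\cup V(G_2)$, $V(G_1)\cap V(G_2)=\{v\}$, $|V(G_1)|,|V(G_2)|>1$; (F2) $G_1,G_2$ are cographs; (F3) $G-v$ is the join or the disjoint union of $G_1-v$ and $G_2-v$. *)

theory Defs
  imports Main
begin

definition simple_graph :: "'a set \<Rightarrow> ('a \<Rightarrow> 'a \<Rightarrow> bool) \<Rightarrow> bool" where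
  "simple_graph V E \<longleftrightarrow> finite V \<and> (\<forall>x y. E x y \<longrightarrow> x \<in> V \<and> y \<in> V)
     \<and> (\<forall>x y. E x y \<longrightarrow> E y x) \<and> (\<forall>x. \<not> E x x)"

definition induced :: "('a \<Rightarrow> 'a \<Rightarrow> bool) \<Rightarrow> 'a set \<Rightarrow> 'a \<Rightarrow> 'a \<Rightarrow> bool" where
  "induced E S = (\<lambda>x y. E x y \<and> x \<in> S \<and> y \<in> S)"

definition cograph :: "'a set \<Rightarrow> ('a \<Rightarrow> 'a \<Rightarrow> bool) \<Rightarrow> bool" where
  "cograph V E \<longleftrightarrow> \<not> (\<exists>a\<in>V. \<exists>b\<in>V. \<exists>c\<in>V. \<exists>d\<in>V. distinct [a,b,c,d] \<and>
      E a b \<and> E b c \<and> E c d \<and> \<not> E a c \<and> \<not> E b d \<and> \<not> E a d)"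

definition graph_union_edges ::
  "('a \<Rightarrow> 'a \<Rightarrow> bool) \<Rightarrow> ('a \<Rightarrow> 'a \<Rightarrow> bool) \<Rightarrow> 'a \<Rightarrow> 'a \<Rightarrow> bool" where
  "graph_union_edges E1 E2 = (\<lambda>x y. E1 x y \<or> E2 x y)"

definition graph_join_edges ::
  "'a set \<Rightarrow> ('a \<Rightarrow> 'a \<Rightarrow> bool) \<Rightarrow> 'a set \<Rightarrow> ('a \<Rightarrow> 'a \<Rightarrow> bool) \<Rightarrow> 'a \<Rightarrow> 'a \<Rightarrow> bool" where
  "graph_join_edges V1 E1 V2 E2 = (\<lambda>x y. E1 x y \<or> E2 x y \<or>
      (x \<in> V1 \<and> y \<in> V2) \<or> (x \<in> V2 \<and> y \<in> V1))"

definition pseudo_cograph :: "'a set \<Rightarrow> ('a \<Rightarrow> 'a \<Rightarrow> bool) \<Rightarrow> bool" where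
  "pseudo_cograph V E \<longleftrightarrow> card V \<le> 2 \<or>
    (\<exists>V1 V2 v. V1 \<subseteq> V \<and> V2 \<subseteq> V \<and> v \<in> V \<and>
       V = V1 \<union> V2 \<and> V1 \<inter> V2 = {v} \<and> card V1 > 1 \<and> card V2 > 1 \<and>
       cograph V1 (induced E V1) \<and> cograph V2 (induced E V2) \<and>
       (induced E (V - {v}) =
           graph_join_edges (V1 - {v}) (induced E (V1 - {v})) (V2 - {v}) (induced E (V2 - {v}))
        \<or> induced E (V - {v}) =
           graph_union_edges (induced E (V1 - {v})) (induced E (V2 - {v}))))"

text \<open>Walks given as vertex lists; a walk with list xs has length (length xs - 1).\<close>
definition is_walk :: "'a set \<Rightarrow> ('a \<Rightarrow> 'a \<Rightarrow> bool) \<Rightarrow> 'a list \<Rightarrow> 'a \<Rightarrow> 'a \<Rightarrow> bool" where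
  "is_walk V E xs x y \<longleftrightarrow> xs \<noteq> [] \<and> hd xs = x \<and> last xs = y \<and> set xs \<subseteq> V \<and>
     (\<forall>i. Suc i < length xs \<longrightarrow> E (xs ! i) (xs ! Suc i))"

definition connected_graph :: "'a set \<Rightarrow> ('a \<Rightarrow> 'a \<Rightarrow> bool) \<Rightarrow> bool" where
  "connected_graph V E \<longleftrightarrow> V \<noteq> {} \<and> (\<forall>x\<in>V. \<forall>y\<in>V. \<exists>xs. is_walk V E xs x y)"

definition graph_dist :: "'a set \<Rightarrow> ('a \<Rightarrow> 'a \<Rightarrow> bool) \<Rightarrow> 'a \<Rightarrow> 'a \<Rightarrow> nat" where
  "graph_dist V E x y = (LEAST n. \<exists>xs. is_walk V E xs x y \<and> length xs = Suc n)"

definition diameter :: "'a set \<Rightarrow> ('a \<Rightarrow> 'a \<Rightarrow> bool) \<Rightarrow> nat" where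
  "diameter V E = Max {graph_dist V E x y | x y. x \<in> V \<and> y \<in> V}"

definition has_induced_path :: "'a set \<Rightarrow> ('a \<Rightarrow> 'a \<Rightarrow> bool) \<Rightarrow> nat \<Rightarrow> bool" where
  "has_induced_path V E n \<longleftrightarrow> (\<exists>p :: nat \<Rightarrow> 'a. inj_on p {..<n} \<and> p ` {..<n} \<subseteq> V \<and>
     (\<forall>i<n. \<forall>j<n. E (p i) (p j) \<longleftrightarrow> (j = Suc i \<or> i = Suc j)))"

end

theory Submission
  imports Defs
begin

text \<open>A shortest walk is an induced path, so a connected induced subgraph of diameter at
least 5 contains an induced \<open>P\<^sub>6\<close>; it therefore suffices to exclude induced \<open>P\<^sub>6\<close>
(and hence all longer induced paths) in a pseudo-cograph. Split a six-vertex induced path along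
\<open>V\<^sub>1 - {v}\<close>, \<open>V\<^sub>2 - {v}\<close> and \<open>v\<close>. If \<open>G - v\<close> is a disjoint union, the path can only change
sides at \<open>v\<close>, so one side together with \<open>v\<close> contains four consecutive path vertices, an
induced \<open>P\<^sub>4\<close> in a cograph. If \<open>G - v\<close> is a join, every vertex on one side is adjacent to
every vertex on the other, which a path only permits for at most four vertices; as at least
five path vertices differ from \<open>v\<close>, one side is empty and the whole path lies in a cograph.\<close>

definition induced_path :: "('a \<Rightarrow> 'a \<Rightarrow> bool) \<Rightarrow> (nat \<Rightarrow> 'a) \<Rightarrow> nat \<Rightarrow> bool" where
  "induced_path E p n \<longleftrightarrow> inj_on p {..<n} \<and>
     (\<forall>i<n. \<forall>j<n. E (p i) (p j) \<longleftrightarrow> (j = Suc i \<or> i = Suc j))"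

lemma has_induced_path_iff:
  "has_induced_path V E n \<longleftrightarrow> (\<exists>p. induced_path E p n \<and> p ` {..<n} \<subseteq> V)"
  unfolding has_induced_path_def induced_path_def by blast

lemma induced_path_induced_iff:
  assumes "p ` {..<n} \<subseteq> S"
  shows "induced_path (induced E S) p n \<longleftrightarrow> induced_path E p n"
  using assms unfolding induced_path_def induced_def by (auto simp: image_subset_iff)

lemma has_induced_path_induced_subgraph:
  assumes "has_induced_path S (induced E S) n" and "S \<subseteq> V"
  shows "has_induced_path V E n"
proof -
  obtain p where "induced_path (induced E S) p n" and "p ` {..<n} \<subseteq> S"
    using assms(1) unfolding has_induced_path_iff by blast
  then show ?thesis
    unfolding has_induced_path_iff using assms(2) induced_path_induced_iff by blast
qed

lemma induced_path_prefix:
  assumes "induced_path E p n" and "m \<le> n"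
  shows "induced_path E p m"
proof -
  have sub: "{..<m} \<subseteq> {..<n}" using assms(2) by auto
  show ?thesis
    unfolding induced_path_def
  proof (intro conjI allI impI)
    show "inj_on p {..<m}"
      using assms(1) sub unfolding induced_path_def by (blast intro: inj_on_subset)
    show "E (p i) (p j) \<longleftrightarrow> (j = Suc i \<or> i = Suc j)" if "i < m" "j < m" for i j
      using assms that unfolding induced_path_def by simp
  qed
qed

lemma has_induced_path_le:
  assumes "has_induced_path V E n" and "m \<le> n"
  shows "has_induced_path V E m"
proof -
  obtain p where "induced_path E p n" and "p ` {..<n} \<subseteq> V"
    using assms(1) unfolding has_induced_path_iff by blast
  then show ?thesis
    unfolding has_induced_path_iff using assms(2) induced_path_prefix by fastforce
qed

lemma has_induced_path_card:
  assumes "has_induced_path V E n" and "finite V"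
  shows "n \<le> card V"
proof -
  obtain p where "inj_on p {..<n}" "p ` {..<n} \<subseteq> V"
    using assms(1) unfolding has_induced_path_def by blast
  then show ?thesis
    using card_mono[OF assms(2)] by (metis card_image card_lessThan)
qed

lemma induced_path_window_not_cograph:
  assumes "induced_path E p n" and "k + 4 \<le> n" and "p ` {k..<k+4} \<subseteq> W"
  shows "\<not> cograph W (induced E W)"
proof -
  from assms(1) have inj: "inj_on p {..<n}"
    and adj: "\<And>i j. i < n \<Longrightarrow> j < n \<Longrightarrow> E (p i) (p j) \<longleftrightarrow> (j = Suc i \<or> i = Suc j)"
    unfolding induced_path_def by auto
  have "p i \<noteq> p j" if "i < n" "j < n" "i \<noteq> j" for i j
    using inj that by (meson inj_onD lessThan_iff)
  then have "distinct [p k, p (k+1), p (k+2), p (k+3)]"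
    using assms(2) by simp
  moreover have "p k \<in> W" "p (k+1) \<in> W" "p (k+2) \<in> W" "p (k+3) \<in> W"
    using assms(3) by auto
  moreover have "E (p k) (p (k+1))" "E (p (k+1)) (p (k+2))" "E (p (k+2)) (p (k+3))"
    "\<not> E (p k) (p (k+2))" "\<not> E (p (k+1)) (p (k+3))" "\<not> E (p k) (p (k+3))"
    using assms(2) adj[of k "k+1"] adj[of "k+1" "k+2"] adj[of "k+2" "k+3"]
      adj[of k "k+2"] adj[of "k+1" "k+3"] adj[of k "k+3"] by simp_all
  ultimately show ?thesis
    unfolding cograph_def not_not induced_def
    by (intro bexI[of _ "p k"] bexI[of _ "p (k+1)"] bexI[of _ "p (k+2)"] bexI[of _ "p (k+3)"]) auto
qed

lemma is_walk_splice:
  assumes W: "is_walk S F xs x y" and "a \<le> j" and "j < length xs"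
    and start: "a = 0 \<Longrightarrow> xs!j = x" and link: "0 < a \<Longrightarrow> F (xs!(a-1)) (xs!j)"
  shows "is_walk S F (take a xs @ drop j xs) x y"
proof -
  let ?ys = "take a xs @ drop j xs"
  from W have ne: "xs \<noteq> []" and hd: "hd xs = x" and la: "last xs = y" and st: "set xs \<subseteq> S"
    and ed: "\<And>i. Suc i < length xs \<Longrightarrow> F (xs!i) (xs!Suc i)"
    unfolding is_walk_def by auto
  have "hd ?ys = x"
  proof (cases "a = 0")
    case True then show ?thesis using start \<open>j < length xs\<close> by (simp add: hd_drop_conv_nth)
  next
    case False then show ?thesis using hd ne by (simp add: hd_append)
  qed
  moreover have "last ?ys = y" using la \<open>j < length xs\<close> by (simp add: last_append)
  moreover have "set ?ys \<subseteq> S" using st set_take_subset set_drop_subset by fastforce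
  moreover have "F (?ys!i) (?ys!Suc i)" if "Suc i < length ?ys" for i
  proof -
    consider "Suc i < a" | "Suc i = a" | "a \<le> i" by linarith
    then show ?thesis
    proof cases
      case 1 then show ?thesis using assms(2,3) ed[of i] by (simp add: nth_append)
    next
      case 2
      then have "i = a - 1" and "0 < a" by auto
      then show ?thesis using assms(2,3) link by (simp add: nth_append)
    next
      case 3
      then have "?ys!i = xs!(j + (i - a))" and "?ys!Suc i = xs!Suc (j + (i - a))"
        using assms(2,3) by (simp_all add: nth_append Suc_diff_le)
      moreover have "Suc (j + (i - a)) < length xs" using that 3 assms(2,3) by simp
      ultimately show ?thesis using ed by simp
    qed
  qed
  ultimately show ?thesis unfolding is_walk_def using \<open>j < length xs\<close> by auto
qed

context
  fixes S F xs x y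
  assumes walk: "is_walk S F xs x y"
    and shortest: "\<And>ys. is_walk S F ys x y \<Longrightarrow> length xs \<le> length ys"
begin

lemma shortest_walk_distinct: "distinct xs"
proof (rule ccontr)
  assume "\<not> distinct xs"
  then obtain i j where "i < j" "j < length xs" "xs!i = xs!j"
    by (metis distinct_conv_nth linorder_neqE_nat)
  moreover from walk have "hd xs = x" and "xs \<noteq> []"
    and step: "\<And>i. Suc i < length xs \<Longrightarrow> F (xs!i) (xs!Suc i)"
    unfolding is_walk_def by auto
  moreover have "F (xs!(i-1)) (xs!j)" if "0 < i"
    using step[of "i - 1"] that calculation by simp
  ultimately have "is_walk S F (take i xs @ drop j xs) x y"
    by (intro is_walk_splice[OF walk]) (auto simp: hd_conv_nth)
  with shortest \<open>i < j\<close> \<open>j < length xs\<close> show False by fastforce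
qed

lemma shortest_walk_no_shortcut:
  assumes "i < j" and "j < length xs" and "F (xs!i) (xs!j)"
  shows "j = Suc i"
proof (rule ccontr)
  assume "j \<noteq> Suc i"
  with assms have "is_walk S F (take (Suc i) xs @ drop j xs) x y"
    by (intro is_walk_splice[OF walk]) auto
  with shortest \<open>j \<noteq> Suc i\<close> assms(1,2) show False by fastforce
qed

lemma shortest_walk_induced_path:
  assumes "symp F" and "irreflp F"
  shows "induced_path F (nth xs) (length xs)"
  unfolding induced_path_def
proof (intro conjI allI impI)
  show "inj_on (nth xs) {..<length xs}"
    using shortest_walk_distinct by (simp add: inj_on_nth)
  have step: "F (xs!i) (xs!Suc i)" if "Suc i < length xs" for i
    using walk that unfolding is_walk_def by blast
  fix i j assume "i < length xs" "j < length xs"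
  consider "i < j" | "j < i" | "i = j" by linarith
  then show "F (xs!i) (xs!j) \<longleftrightarrow> (j = Suc i \<or> i = Suc j)"
  proof cases
    case 1
    then show ?thesis
      using shortest_walk_no_shortcut[of i j] step[of i] \<open>j < length xs\<close> by auto
  next
    case 2
    then show ?thesis
      using shortest_walk_no_shortcut[of j i] step[of j] \<open>i < length xs\<close>
        sympD[OF assms(1), of "xs!i" "xs!j"] sympD[OF assms(1), of "xs!j" "xs!i"] by auto
  next
    case 3
    then show ?thesis using irreflpD[OF assms(2)] by auto
  qed
qed

end

lemma graph_dist_shortest_walk:
  assumes "is_walk S F ys x y"
  obtains xs where "is_walk S F xs x y" and "length xs = Suc (graph_dist S F x y)"
    and "\<And>zs. is_walk S F zs x y \<Longrightarrow> length xs \<le> length zs"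
proof -
  have walk_length: "length zs = Suc (length zs - 1)" if "is_walk S F zs x y" for zs
    using that unfolding is_walk_def by simp
  have "\<exists>xs. is_walk S F xs x y \<and> length xs = Suc (graph_dist S F x y)"
    unfolding graph_dist_def
  proof (rule LeastI_ex)
    show "\<exists>n xs. is_walk S F xs x y \<and> length xs = Suc n"
      using assms walk_length by blast
  qed
  then obtain xs where walk: "is_walk S F xs x y" and len: "length xs = Suc (graph_dist S F x y)"
    by blast
  have "length xs \<le> length zs" if "is_walk S F zs x y" for zs
  proof -
    have "graph_dist S F x y \<le> length zs - 1"
      unfolding graph_dist_def by (rule Least_le) (use that walk_length in blast)
    then show ?thesis using len walk_length[OF that] by linarith
  qed
  with walk len show ?thesis by (rule that)
qed

lemma has_induced_path_graph_dist:
  assumes "symp F" and "irreflp F" and "is_walk S F ys x y"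
  shows "has_induced_path S F (Suc (graph_dist S F x y))"
proof -
  obtain xs where walk: "is_walk S F xs x y" and len: "length xs = Suc (graph_dist S F x y)"
    and shortest: "\<And>zs. is_walk S F zs x y \<Longrightarrow> length xs \<le> length zs"
    using graph_dist_shortest_walk[OF assms(3)] by blast
  have "induced_path F (nth xs) (length xs)"
    using shortest_walk_induced_path[OF walk shortest assms(1,2)] .
  moreover have "nth xs ` {..<length xs} \<subseteq> S"
    using walk unfolding is_walk_def by auto
  ultimately show ?thesis
    unfolding has_induced_path_iff len by blast
qed

lemma diameter_le_if_no_induced_path:
  assumes "simple_graph V E" and "S \<subseteq> V" and "connected_graph S (induced E S)"
    and "\<not> has_induced_path V E (Suc (Suc k))"
  shows "diameter S (induced E S) \<le> k"
proof -
  let ?F = "induced E S"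
  from assms(1) have "\<And>a b. E a b \<Longrightarrow> E b a" and "\<And>a. \<not> E a a"
    unfolding simple_graph_def by blast+
  then have "symp ?F" and "irreflp ?F"
    unfolding induced_def symp_def irreflp_def by blast+
  have dist_le: "graph_dist S ?F x y \<le> k" if "x \<in> S" and "y \<in> S" for x y
  proof (rule ccontr)
    assume far: "\<not> ?thesis"
    from assms(3) \<open>x \<in> S\<close> \<open>y \<in> S\<close> obtain ys where "is_walk S ?F ys x y"
      unfolding connected_graph_def by blast
    then have "has_induced_path S ?F (Suc (graph_dist S ?F x y))"
      by (rule has_induced_path_graph_dist[OF \<open>symp ?F\<close> \<open>irreflp ?F\<close>])
    then have "has_induced_path V E (Suc (graph_dist S ?F x y))"
      using assms(2) by (rule has_induced_path_induced_subgraph)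
    then have "has_induced_path V E (Suc (Suc k))"
      by (rule has_induced_path_le) (use far in simp)
    with assms(4) show False by contradiction
  qed
  have dists: "{graph_dist S ?F x y | x y. x \<in> S \<and> y \<in> S} =
      (\<lambda>(x, y). graph_dist S ?F x y) ` (S \<times> S)"
    by auto
  have "finite V"
    using assms(1) unfolding simple_graph_def by simp
  then have "finite S"
    using assms(2) by (rule rev_finite_subset)
  moreover have "S \<noteq> {}"
    using assms(3) unfolding connected_graph_def by simp
  ultimately show ?thesis
    unfolding diameter_def dists using dist_le by (simp add: Max_le_iff)
qed

lemma induced_path_adjacent:
  assumes "induced_path E p n" and "Suc i < n"
  shows "E (p i) (p (Suc i))"
  using assms unfolding induced_path_def by simp

lemma path_stays_in_side:
  assumes edges: "\<And>i. a \<le> i \<Longrightarrow> i < b \<Longrightarrow> E (p i) (p (Suc i))"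
    and cover: "p ` {a..b} \<subseteq> X \<union> Y"
    and sep: "\<And>x y. x \<in> X \<Longrightarrow> y \<in> Y \<Longrightarrow> \<not> E x y"
    and start: "p a \<in> X"
  shows "p ` {a..b} \<subseteq> X"
proof -
  have "p i \<in> X" if "a \<le> i" and "i \<le> b" for i
    using that
  proof (induction i rule: dec_induct)
    case base
    show ?case by (rule start)
  next
    case (step i)
    then have "p i \<in> X" and "E (p i) (p (Suc i))"
      using edges by simp_all
    moreover have "Suc i \<in> {a..b}"
      using step by simp
    then have "p (Suc i) \<in> X \<union> Y"
      using cover by blast
    ultimately show ?case
      using sep by blast
  qed
  then show ?thesis by auto
qed

lemma path_segment_in_one_side:
  assumes edges: "\<And>i. a \<le> i \<Longrightarrow> i < b \<Longrightarrow> E (p i) (p (Suc i))"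
    and cover: "p ` {a..b} \<subseteq> X \<union> Y"
    and sep: "\<And>x y. x \<in> X \<Longrightarrow> y \<in> Y \<Longrightarrow> \<not> E x y \<and> \<not> E y x"
  shows "p ` {a..b} \<subseteq> X \<or> p ` {a..b} \<subseteq> Y"
proof (cases "a \<le> b")
  case True
  then have "a \<in> {a..b}" by simp
  then have "p a \<in> X \<or> p a \<in> Y"
    using cover by blast
  moreover have "p ` {a..b} \<subseteq> Y \<union> X"
    using cover by auto
  ultimately show ?thesis
    using path_stays_in_side[of a b E p X Y] path_stays_in_side[of a b E p Y X] edges cover sep
    by blast
qed simp

lemma card_cross_adjacent_le:
  fixes A B :: "nat set"
  assumes cross: "\<And>i j. i \<in> A \<Longrightarrow> j \<in> B \<Longrightarrow> j = Suc i \<or> i = Suc j"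
    and "A \<noteq> {}" and "B \<noteq> {}"
  shows "card (A \<union> B) \<le> 4"
proof -
  obtain a b where "a \<in> A" and "b \<in> B"
    using assms(2,3) by blast
  have "A \<subseteq> {Suc b, b - 1}" and "B \<subseteq> {Suc a, a - 1}"
    using cross \<open>a \<in> A\<close> \<open>b \<in> B\<close> by fastforce+
  then have "card A \<le> 2" and "card B \<le> 2"
    by (auto dest!: card_mono[rotated] simp: card_insert_if split: if_splits)
  then show ?thesis
    using card_Un_le[of A B] by linarith
qed

context
  fixes E :: "'a \<Rightarrow> 'a \<Rightarrow> bool" and p :: "nat \<Rightarrow> 'a" and V1 V2 :: "'a set" and v :: 'a
  assumes path: "induced_path E p 6"
    and cover: "p ` {..<6} \<subseteq> V1 \<union> V2"
    and meet: "V1 \<inter> V2 = {v}"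
    and cograph1: "cograph V1 (induced E V1)"
    and cograph2: "cograph V2 (induced E V2)"
begin

lemma window_not_in_one_side:
  assumes "k \<le> 2" and "{k..<k+4} \<subseteq> I" and "p ` I \<subseteq> V1 \<or> p ` I \<subseteq> V2"
  shows False
proof -
  have "p ` {k..<k+4} \<subseteq> V1 \<or> p ` {k..<k+4} \<subseteq> V2"
    using assms(2,3) image_mono by blast
  then show False
    using induced_path_window_not_cograph[OF path, of k] assms(1) cograph1 cograph2 by auto
qed

lemma path_segment_avoiding_in_one_side:
  assumes sep: "\<And>a b. a \<in> V1 - {v} \<Longrightarrow> b \<in> V2 - {v} \<Longrightarrow> \<not> E a b \<and> \<not> E b a"
    and "b < 6" and avoid: "\<And>i. a \<le> i \<Longrightarrow> i \<le> b \<Longrightarrow> p i \<noteq> v"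
  shows "p ` {a..b} \<subseteq> V1 - {v} \<or> p ` {a..b} \<subseteq> V2 - {v}"
proof (rule path_segment_in_one_side)
  show "E (p i) (p (Suc i))" if "a \<le> i" and "i < b" for i
    using induced_path_adjacent[OF path] that \<open>b < 6\<close> by simp
  show "p ` {a..b} \<subseteq> (V1 - {v}) \<union> (V2 - {v})"
  proof (rule image_subsetI)
    fix i assume "i \<in> {a..b}"
    then have "i \<in> {..<6}"
      using \<open>b < 6\<close> by simp
    then have "p i \<in> V1 \<union> V2"
      using cover by blast
    then show "p i \<in> (V1 - {v}) \<union> (V2 - {v})"
      using avoid[of i] \<open>i \<in> {a..b}\<close> by auto
  qed
qed (rule sep)

lemma union_split_no_induced_P6:
  assumes sep: "\<And>a b. a \<in> V1 - {v} \<Longrightarrow> b \<in> V2 - {v} \<Longrightarrow> \<not> E a b \<and> \<not> E b a"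
  shows False
proof -
  note segment = path_segment_avoiding_in_one_side[OF sep]
  have inj: "inj_on p {..<6}"
    using path unfolding induced_path_def by simp
  have v_in: "v \<in> V1" "v \<in> V2"
    using meet by auto
  consider "\<And>i. i < 6 \<Longrightarrow> p i \<noteq> v" | k where "k < 6" and "p k = v"
    by blast
  then show False
  proof cases
    case 1
    then have "p ` {0..5} \<subseteq> V1 - {v} \<or> p ` {0..5} \<subseteq> V2 - {v}"
      by (intro segment) auto
    then show False
      by (intro window_not_in_one_side[of 0 "{0..5}"]) auto
  next
    case 2
    have avoid: "p i \<noteq> v" if "i < 6" and "i \<noteq> k" for i
      using inj_on_eq_iff[OF inj, of i k] that 2 by simp
    show False
    proof (cases "3 \<le> k")
      case True
      then have "p ` {0..k-1} \<subseteq> V1 - {v} \<or> p ` {0..k-1} \<subseteq> V2 - {v}"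
        using 2 avoid by (intro segment) auto
      then have "p ` insert k {0..k-1} \<subseteq> V1 \<or> p ` insert k {0..k-1} \<subseteq> V2"
        using 2 v_in by auto
      then show False
        using True \<open>k < 6\<close> by (intro window_not_in_one_side[of "k-3" "insert k {0..k-1}"]) auto
    next
      case False
      then have "p ` {k+1..5} \<subseteq> V1 - {v} \<or> p ` {k+1..5} \<subseteq> V2 - {v}"
        using avoid by (intro segment) auto
      then have "p ` insert k {k+1..5} \<subseteq> V1 \<or> p ` insert k {k+1..5} \<subseteq> V2"
        using 2 v_in by auto
      then show False
        using False by (intro window_not_in_one_side[of k "insert k {k+1..5}"]) auto
    qed
  qed
qed

lemma join_split_no_induced_P6:
  assumes cross: "\<And>a b. a \<in> V1 - {v} \<Longrightarrow> b \<in> V2 - {v} \<Longrightarrow> E a b"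
  shows False
proof -
  define A where "A = {i \<in> {..<6}. p i \<in> V1 - {v}}"
  define B where "B = {i \<in> {..<6}. p i \<in> V2 - {v}}"
  define C where "C = {i \<in> {..<6}. p i = v}"
  have in_V: "p i \<in> V1 \<union> V2" if "i < 6" for i
    using cover that by blast
  have inj: "inj_on p {..<6}"
    using path unfolding induced_path_def by simp
  have "A = {} \<or> B = {}"
  proof (rule ccontr)
    assume "\<not> (A = {} \<or> B = {})"
    moreover have "j = Suc i \<or> i = Suc j" if "i \<in> A" and "j \<in> B" for i j
      using that cross path unfolding A_def B_def induced_path_def by auto
    ultimately have "card (A \<union> B) \<le> 4"
      using card_cross_adjacent_le by blast
    moreover have "card C \<le> 1"
      unfolding C_def using inj by (auto simp: card_le_Suc0_iff_eq inj_on_eq_iff)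
    moreover have "{..<6} - C \<subseteq> A \<union> B"
      using in_V unfolding A_def B_def C_def by auto
    then have "card ({..<6::nat} - C) \<le> card (A \<union> B)"
      by (intro card_mono) (auto simp: A_def B_def)
    moreover have "card {..<6::nat} - card C \<le> card ({..<6} - C)"
      by (rule diff_card_le_card_Diff) (simp add: C_def)
    ultimately show False
      by simp
  qed
  then have "p ` {..<6} \<subseteq> V2 \<or> p ` {..<6} \<subseteq> V1"
    using in_V meet unfolding A_def B_def by auto
  then show False
    by (intro window_not_in_one_side[of 0 "{..<6}"]) auto
qed

end

lemma join_edges_cross:
  assumes "induced E (V - {v}) =
      graph_join_edges (V1 - {v}) (induced E (V1 - {v})) (V2 - {v}) (induced E (V2 - {v}))"
    and "V = V1 \<union> V2" and "a \<in> V1 - {v}" and "b \<in> V2 - {v}"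
  shows "E a b"
proof -
  have "graph_join_edges (V1 - {v}) (induced E (V1 - {v})) (V2 - {v}) (induced E (V2 - {v})) a b"
    using assms(3,4) unfolding graph_join_edges_def by simp
  then have "induced E (V - {v}) a b"
    using assms(1) by simp
  then show ?thesis
    unfolding induced_def by simp
qed

lemma union_edges_no_cross:
  assumes "induced E (V - {v}) = graph_union_edges (induced E (V1 - {v})) (induced E (V2 - {v}))"
    and "V = V1 \<union> V2" and "V1 \<inter> V2 = {v}" and "a \<in> V1 - {v}" and "b \<in> V2 - {v}"
  shows "\<not> E a b \<and> \<not> E b a"
proof -
  have "a \<in> V - {v}" and "b \<in> V - {v}" and "a \<notin> V2" and "b \<notin> V1"
    using assms(2-5) by auto
  then have "\<not> graph_union_edges (induced E (V1 - {v})) (induced E (V2 - {v})) a b"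
    and "\<not> graph_union_edges (induced E (V1 - {v})) (induced E (V2 - {v})) b a"
    unfolding graph_union_edges_def induced_def by auto
  then have "\<not> induced E (V - {v}) a b" and "\<not> induced E (V - {v}) b a"
    using assms(1) by simp_all
  then show ?thesis
    using \<open>a \<in> V - {v}\<close> \<open>b \<in> V - {v}\<close> unfolding induced_def by auto
qed

lemma pseudo_cograph_no_induced_P6:
  assumes "simple_graph V E" and "pseudo_cograph V E"
  shows "\<not> has_induced_path V E 6"
proof
  assume P6: "has_induced_path V E 6"
  then obtain p where path: "induced_path E p 6" and sub: "p ` {..<6} \<subseteq> V"
    unfolding has_induced_path_iff by blast
  have "finite V"
    using assms(1) unfolding simple_graph_def by simp
  from assms(2) consider "card V \<le> 2"
    | V1 V2 v where "V = V1 \<union> V2" and "V1 \<inter> V2 = {v}"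
      and "cograph V1 (induced E V1)" and "cograph V2 (induced E V2)"
      and "induced E (V - {v}) =
             graph_join_edges (V1 - {v}) (induced E (V1 - {v})) (V2 - {v}) (induced E (V2 - {v}))
           \<or> induced E (V - {v}) = graph_union_edges (induced E (V1 - {v})) (induced E (V2 - {v}))"
    unfolding pseudo_cograph_def by blast
  then show False
  proof cases
    case 1
    then show False
      using has_induced_path_card[OF P6 \<open>finite V\<close>] by simp
  next
    case (2 V1 V2 v)
    have cover: "p ` {..<6} \<subseteq> V1 \<union> V2"
      using sub 2(1) by simp
    from 2(5) show False
    proof
      assume join: "induced E (V - {v}) =
        graph_join_edges (V1 - {v}) (induced E (V1 - {v})) (V2 - {v}) (induced E (V2 - {v}))"
      show False
        by (rule join_split_no_induced_P6[OF path cover 2(2-4)])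
          (rule join_edges_cross[OF join 2(1)])
    next
      assume union: "induced E (V - {v}) =
        graph_union_edges (induced E (V1 - {v})) (induced E (V2 - {v}))"
      show False
        by (rule union_split_no_induced_P6[OF path cover 2(2-4)])
          (rule union_edges_no_cross[OF union 2(1,2)])
    qed
  qed
qed

theorem mainTheorem10:
  fixes V :: "'a set" and E :: "'a \<Rightarrow> 'a \<Rightarrow> bool"
  assumes "simple_graph V E" and "pseudo_cograph V E"
  shows "(\<forall>S. S \<subseteq> V \<longrightarrow> connected_graph S (induced E S) \<longrightarrow> diameter S (induced E S) \<le> 4)
       \<and> (\<forall>n\<ge>6. \<not> has_induced_path V E n)"
proof -
  have no_P6: "\<not> has_induced_path V E 6"
    using pseudo_cograph_no_induced_P6[OF assms] .
  then have "\<not> has_induced_path V E (Suc (Suc 4))"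
    by (simp add: numeral_eq_Suc)
  then have "diameter S (induced E S) \<le> 4"
    if "S \<subseteq> V" and "connected_graph S (induced E S)" for S
    using diameter_le_if_no_induced_path[OF assms(1) that] by blast
  moreover have "\<not> has_induced_path V E n" if "n \<ge> 6" for n
    using no_P6 has_induced_path_le that by blast
  ultimately show ?thesis
    by blast
qed

end
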